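(* For every integer $n\ge 3$, $$m^*(n,3)\le \left\lceil \frac{3}{\log_2 3}\log_2 n\right\rceil.$$
   Context: For a binary matrix $M$ and a nonempty set $S$ of its columns, $S$ is a stopping set if the submatrix formed by $S$ has no row with exactly one $1$; $s(M)$ is the minimum size of a stopping set ($+\infty$ if none). $M$ is $d$-decodable if $s(M)\ge d+1$. $m^*(n,d)$ is the minimum $m$ such that an $m\times n$ $d$-decodable binary matrix exists. *)

theory Defs
  imports Complex_Main "HOL-Library.Extended_Nat"
begin

text \<open>An m x n binary matrix is represented as M :: nat => nat => bool, where
  M i j (for i < m, j < n) is the entry in row i, column j (True = 1).
  Entries outside the range are irrelevant to all definitions below.\<close>

definition stopping_set :: "nat \<Rightarrow> nat \<Rightarrow> (nat \<Rightarrow> nat \<Rightarrow> bool) \<Rightarrow> nat set \<Rightarrow> bool" where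
  "stopping_set m n M S \<longleftrightarrow>
     S \<subseteq> {..<n} \<and> S \<noteq> {} \<and>
     (\<forall>i<m. card {j\<in>S. M i j} \<noteq> 1)"

text \<open>Minimum size of a stopping set; infinity if none exists (Inf of the empty
  set of extended naturals is infinity).\<close>
definition stop_dist :: "nat \<Rightarrow> nat \<Rightarrow> (nat \<Rightarrow> nat \<Rightarrow> bool) \<Rightarrow> enat" where
  "stop_dist m n M = Inf {enat (card S) | S. stopping_set m n M S}"

definition decodable :: "nat \<Rightarrow> nat \<Rightarrow> nat \<Rightarrow> (nat \<Rightarrow> nat \<Rightarrow> bool) \<Rightarrow> bool" where
  "decodable m n d M \<longleftrightarrow> stop_dist m n M \<ge> enat (d + 1)"

definition m_star :: "nat \<Rightarrow> nat \<Rightarrow> nat" where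
  "m_star n d = (LEAST m. \<exists>M. decodable m n d M)"

end

theory Submission
  imports Defs
begin

text \<open>A matrix is 3-decodable exactly when every nonempty set of at most three columns has a
  row meeting it in a single column.  Juxtaposing three copies of such a matrix and adding the
  three block indicator rows preserves this: a set of at most three columns either has a block
  containing exactly one of its columns, or lies inside a single block, where the copy of the
  old matrix takes over.  Thus three more rows buy three times as many columns, and starting
  from codes with r = 3, 4, 5 rows and 3, 5, 7 columns (where 3^r \<le> n^3) one
  reaches every n with n^3 \<le> 3^c using c rows.\<close>

lemma decodable_iff:
  "decodable m n d M \<longleftrightarrow>
     (\<forall>S\<in>Pow {..<n}. S \<noteq> {} \<longrightarrow> card S \<le> d \<longrightarrow> (\<exists>i<m. card {j\<in>S. M i j} = 1))"
proof -
  have "decodable m n d M \<longleftrightarrow> (\<forall>S. stopping_set m n M S \<longrightarrow> d < card S)"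
    by (auto simp: decodable_def stop_dist_def le_Inf_iff)
  also have "\<dots> \<longleftrightarrow>
      (\<forall>S\<in>Pow {..<n}. S \<noteq> {} \<longrightarrow> card S \<le> d \<longrightarrow> (\<exists>i<m. card {j\<in>S. M i j} = 1))"
    unfolding stopping_set_def Pow_iff Ball_def by (auto simp flip: not_le)
  finally show ?thesis .
qed

lemma decodable_fewer_columns:
  assumes "decodable m N d M" and "n \<le> N"
  shows "decodable m n d M"
  using assms unfolding decodable_iff by (meson PowD PowI lessThan_subset_iff subset_trans)

lemma m_star_le:
  assumes "decodable m n d M"
  shows "m_star n d \<le> m"
  unfolding m_star_def by (rule Least_le) (use assms in blast)

lemma constant_on_if_no_singleton_fibre:
  assumes "finite S" and "card S \<le> 3"
    and no_singleton: "\<forall>x\<in>S. card {y\<in>S. f y = f x} \<noteq> 1"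
  shows "\<forall>x\<in>S. \<forall>y\<in>S. f x = f y"
proof (intro ballI, rule ccontr)
  fix x y assume "x \<in> S" "y \<in> S" "f x \<noteq> f y"
  have fibre_ge_2: "2 \<le> card {z\<in>S. f z = f w}" if "w \<in> S" for w
  proof -
    have "card {z\<in>S. f z = f w} \<noteq> 0"
      using that \<open>finite S\<close> by (subst card_0_eq) auto
    then show ?thesis using no_singleton that by fastforce
  qed
  have "card {z\<in>S. f z = f x} + card {z\<in>S. f z = f y}
      = card ({z\<in>S. f z = f x} \<union> {z\<in>S. f z = f y})"
    using \<open>finite S\<close> \<open>f x \<noteq> f y\<close> by (intro card_Un_disjoint[symmetric]) auto
  also have "\<dots> \<le> card S"
    using \<open>finite S\<close> by (intro card_mono) auto
  finally show False
    using fibre_ge_2[OF \<open>x \<in> S\<close>] fibre_ge_2[OF \<open>y \<in> S\<close>] \<open>card S \<le> 3\<close> by linarith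
qed

text \<open>b copies of B side by side, below the b indicator rows of the blocks.\<close>
definition block_extension :: "nat \<Rightarrow> nat \<Rightarrow> (nat \<Rightarrow> nat \<Rightarrow> bool) \<Rightarrow> nat \<Rightarrow> nat \<Rightarrow> bool" where
  "block_extension b n B i j \<longleftrightarrow> (if i < b then j div n = i else B (i - b) (j mod n))"

lemma decodable_block_extension:
  assumes "d \<le> 3" and B: "decodable m n d B"
  shows "decodable (b + m) (b * n) d (block_extension b n B)"
  unfolding decodable_iff
proof (intro ballI impI)
  fix S assume "S \<in> Pow {..<b * n}" "S \<noteq> {}" "card S \<le> d"
  then have S: "S \<subseteq> {..<b * n}" and "finite S" by (auto intro: finite_subset)
  show "\<exists>i<b + m. card {j\<in>S. block_extension b n B i j} = 1"
  proof (cases "\<exists>x\<in>S. card {y\<in>S. y div n = x div n} = 1")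
    case True
    then obtain x where "x \<in> S" and "card {y\<in>S. y div n = x div n} = 1" by blast
    moreover have "x div n < b"
      using \<open>x \<in> S\<close> S by (auto intro: less_mult_imp_div_less)
    ultimately show ?thesis
      by (intro exI[of _ "x div n"]) (auto simp: block_extension_def)
  next
    case False
    moreover have "card S \<le> 3" using \<open>card S \<le> d\<close> \<open>d \<le> 3\<close> by linarith
    ultimately have same_block: "\<forall>x\<in>S. \<forall>y\<in>S. x div n = y div n"
      using constant_on_if_no_singleton_fibre[OF \<open>finite S\<close>, of "\<lambda>j. j div n"] by blast
    have inj: "inj_on (\<lambda>j. j mod n) S"
      using same_block by (intro inj_onI) (metis div_mult_mod_eq)
    define T where "T = (\<lambda>j. j mod n) ` S"
    have "0 < n" using S \<open>S \<noteq> {}\<close> by (auto intro: Nat.gr0I)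
    then have "T \<in> Pow {..<n}" "T \<noteq> {}" "card T \<le> d"
      using \<open>S \<noteq> {}\<close> \<open>card S \<le> d\<close> card_image[OF inj] by (auto simp: T_def)
    then obtain i where "i < m" and row: "card {t\<in>T. B i t} = 1"
      using B unfolding decodable_iff by blast
    have "{t\<in>T. B i t} = (\<lambda>j. j mod n) ` {j\<in>S. block_extension b n B (b + i) j}"
      by (auto simp: T_def block_extension_def)
    also have "card \<dots> = card {j\<in>S. block_extension b n B (b + i) j}"
      by (rule card_image, rule inj_on_subset[OF inj]) auto
    finally have "card {j\<in>S. block_extension b n B (b + i) j} = 1"
      using row by simp
    with \<open>i < m\<close> show ?thesis by (intro exI[of _ "b + i"]) simp
  qed
qed

lemma decodable_iterated_block_extension:
  assumes "d \<le> 3" and "decodable m n d B"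
  shows "\<exists>M. decodable (b * k + m) (b ^ k * n) d M"
proof (induction k)
  case 0
  show ?case using assms(2) by auto
next
  case (Suc k)
  then obtain M where "decodable (b * k + m) (b ^ k * n) d M" by blast
  from decodable_block_extension[OF \<open>d \<le> 3\<close> this] show ?case
    by (auto simp: algebra_simps)
qed

definition column_matrix :: "nat list \<Rightarrow> nat \<Rightarrow> nat \<Rightarrow> bool" where
  "column_matrix cs i j \<longleftrightarrow> bit (cs ! j) i"

text \<open>Rewriting the bounded quantifiers into list form first makes evaluation much faster.\<close>
lemma decodable_3_3: "decodable 3 3 3 (\<lambda>i j. i = j)"
  unfolding decodable_iff exists_less_iff lessThan_atLeast0 atLeastLessThan_upt Bex_set
  by code_simp

lemma decodable_4_5: "decodable 4 5 3 (column_matrix [1, 2, 4, 7, 8])"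
  unfolding decodable_iff exists_less_iff lessThan_atLeast0 atLeastLessThan_upt Bex_set
    column_matrix_def
  by code_simp

lemma decodable_5_7: "decodable 5 7 3 (column_matrix [1, 2, 4, 7, 8, 11, 16])"
  unfolding decodable_iff exists_less_iff lessThan_atLeast0 atLeastLessThan_upt Bex_set
    column_matrix_def
  by code_simp

lemma m_star_3_le:
  assumes "3 \<le> c" and "n ^ 3 \<le> 3 ^ c"
  shows "m_star n 3 \<le> c"
proof -
  define k where "k = (c - 3) div 3"
  define r where "r = (c - 3) mod 3 + 3"
  have c_eq: "c = 3 * k + r" and "r \<in> {3, 4, 5}"
    using \<open>3 \<le> c\<close> by (auto simp: k_def r_def)
  then obtain N B where B: "decodable r N 3 B" and "3 ^ r \<le> N ^ 3"
    using decodable_3_3 decodable_4_5 decodable_5_7 by fastforce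
  obtain M where M: "decodable c (3 ^ k * N) 3 M"
    using decodable_iterated_block_extension[OF _ B, of 3 k] c_eq by auto
  have "n ^ 3 \<le> 3 ^ c" by fact
  also have "\<dots> = (3 ^ k) ^ 3 * 3 ^ r"
    unfolding c_eq power_add power_mult[symmetric] by (simp add: mult.commute)
  also have "\<dots> \<le> (3 ^ k * N) ^ 3"
    using \<open>3 ^ r \<le> N ^ 3\<close> unfolding power_mult_distrib by simp
  finally have "n \<le> 3 ^ k * N" by (simp add: power_mono_iff)
  with M show ?thesis by (blast intro: m_star_le decodable_fewer_columns)
qed

lemma le_powr_ceiling_log:
  fixes b x :: real
  assumes "1 < b" and "0 < x"
  shows "x \<le> b powr \<lceil>log b x\<rceil>"
proof -
  have "x = b powr log b x" using assms by simp
  also have "\<dots> \<le> b powr \<lceil>log b x\<rceil>"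
    using \<open>1 < b\<close> by (intro powr_mono) auto
  finally show ?thesis .
qed

theorem theorem5p5:
  fixes n :: nat
  assumes "n \<ge> 3"
  shows "real (m_star n 3) \<le> real_of_int \<lceil>(3 / log 2 3) * log 2 (real n)\<rceil>"
proof -
  have n_pos: "0 < real n" using assms by simp
  have exponent: "(3 / log 2 3) * log 2 (real n) = log 3 (real (n ^ 3))"
    using n_pos log_base_change[of 2 3 "real n"] by (simp add: log_nat_power)
  define c where "c = nat \<lceil>log 3 (real (n ^ 3))\<rceil>"
  have "1 \<le> log 3 (real n)"
    using assms by simp
  then have "3 \<le> log 3 (real (n ^ 3))"
    using n_pos by (simp add: log_nat_power)
  then have c_ge_3: "3 \<le> c" and c_real: "real c = \<lceil>log 3 (real (n ^ 3))\<rceil>"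
    unfolding c_def by linarith+
  have "real (n ^ 3) \<le> 3 powr real c"
    using le_powr_ceiling_log[of 3 "real (n ^ 3)"] n_pos c_real by simp
  also have "\<dots> = real (3 ^ c)"
    by (simp add: powr_realpow)
  finally have "n ^ 3 \<le> 3 ^ c"
    by (rule of_nat_le_iff[THEN iffD1])
  then have "m_star n 3 \<le> c" using c_ge_3 by (rule m_star_3_le[rotated])
  then show ?thesis using exponent c_real by simp
qed

end
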